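(* Let $\mathcal H=\mathbb C^2$ with orthonormal basis $e_1,e_2$. For a selfadjoint unitary $\eta$ on $\mathcal H$ let $\mathcal B(\eta)$ be the unital algebra of operators on the Fermi–Fock space $\mathcal F_-(\mathbb C^2)$ generated by $a_-(e_i)$ and $a_-^\dagger(e_i):=\Gamma(\eta)a_-^*(e_i)\Gamma(\eta)$, $i=1,2$, with involution $x\mapsto x^\dagger:=\Gamma(\eta)x^*\Gamma(\eta)$ ($x^*$ the Hilbert-space adjoint). Then the involutive algebras $(\mathcal B(I),\dagger)$ and $(\mathcal B(-I),\dagger)$ are not involutively isomorphic.
   Context: An involutive algebra is a complex algebra with a conjugate-linear antimultiplicative map $\varphi$ with $\varphi^2=\mathrm{id}$; an involutive isomorphism is an algebra isomorphism $F$ with $F(\varphi(x))=\psi(F(x))$. $\mathcal F_-(\mathbb C^2)$ is the antisymmetric Fock space over $\mathbb C^2$ (dimension 4), $a_-(f),a_-^*(f)$ are the usual Fermi annihilation/creation operators satisfying $a_-(f)a_-^*(g)+a_-^*(g)a_-(f)=\langle f|g\rangle I$, and $\Gamma(\eta)=I\oplus\eta\oplus\eta^{\otimes2}\oplus\cdots$ restricted to $\mathcal F_-$. For $\eta=-I$ the generators satisfy $a_-(f)a_-^\dagger(g)+a_-^\dagger(g)a_-(f)=-\langle f|g\rangle I$. *)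

theory Defs
  imports "Jordan_Normal_Form.Determinant"
begin

(* Operators on the antisymmetric Fock space F_-(C^2) = C^4 are 4x4 complex
   matrices w.r.t. the orthonormal basis
   index 0: vacuum Omega, 1: e1, 2: e2, 3: e1 /\ e2 (normalised). *)

definition hadj :: "complex mat \<Rightarrow> complex mat" where
  "hadj A = mat (dim_col A) (dim_row A) (\<lambda>(i,j). cnj (A $$ (j,i)))"

definition fock_e :: "nat \<Rightarrow> complex vec" where
  "fock_e i = unit_vec 2 i"

(* Fermi creation operator a_-^*(f):
   Omega |-> f1 e1 + f2 e2,  e1 |-> f2 e2/\e1 = -f2 e1/\e2,  e2 |-> f1 e1/\e2 *)
definition fermi_cre :: "complex vec \<Rightarrow> complex mat" where
  "fermi_cre f = mat 4 4 (\<lambda>(i,j).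
     if (i,j) = (1,0) then f $ 0
     else if (i,j) = (2,0) then f $ 1
     else if (i,j) = (3,1) then - (f $ 1)
     else if (i,j) = (3,2) then f $ 0
     else 0)"

definition fermi_ann :: "complex vec \<Rightarrow> complex mat" where
  "fermi_ann f = hadj (fermi_cre f)"

(* second quantisation Gamma(eta) restricted to F_-(C^2):
   1 on the vacuum, eta on one-particle space, Lambda^2 eta = det eta on e1/\e2 *)
definition Gamma :: "complex mat \<Rightarrow> complex mat" where
  "Gamma eta = mat 4 4 (\<lambda>(i,j).
     if i = 0 \<and> j = 0 then 1
     else if i \<in> {1,2} \<and> j \<in> {1,2} then eta $$ (i - 1, j - 1)
     else if i = 3 \<and> j = 3 then det eta
     else 0)"

definition dagger :: "complex mat \<Rightarrow> complex mat \<Rightarrow> complex mat" where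
  "dagger eta x = Gamma eta * hadj x * Gamma eta"

definition fermi_cre_dag :: "complex mat \<Rightarrow> complex vec \<Rightarrow> complex mat" where
  "fermi_cre_dag eta f = Gamma eta * fermi_cre f * Gamma eta"

inductive_set Balg :: "complex mat \<Rightarrow> complex mat set" for eta where
  unit: "1\<^sub>m 4 \<in> Balg eta"
| gen_ann: "i < 2 \<Longrightarrow> fermi_ann (fock_e i) \<in> Balg eta"
| gen_cre: "i < 2 \<Longrightarrow> fermi_cre_dag eta (fock_e i) \<in> Balg eta"
| add: "x \<in> Balg eta \<Longrightarrow> y \<in> Balg eta \<Longrightarrow> x + y \<in> Balg eta"
| mult: "x \<in> Balg eta \<Longrightarrow> y \<in> Balg eta \<Longrightarrow> x * y \<in> Balg eta"
| smult: "x \<in> Balg eta \<Longrightarrow> c \<cdot>\<^sub>m x \<in> Balg eta"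

definition inv_iso ::
  "complex mat set \<Rightarrow> (complex mat \<Rightarrow> complex mat) \<Rightarrow> complex mat set
   \<Rightarrow> (complex mat \<Rightarrow> complex mat) \<Rightarrow> (complex mat \<Rightarrow> complex mat) \<Rightarrow> bool" where
  "inv_iso A phi B psi F \<longleftrightarrow>
     bij_betw F A B \<and>
     (\<forall>x\<in>A. \<forall>y\<in>A. F (x + y) = F x + F y) \<and>
     (\<forall>c. \<forall>x\<in>A. F (c \<cdot>\<^sub>m x) = c \<cdot>\<^sub>m F x) \<and>
     (\<forall>x\<in>A. \<forall>y\<in>A. F (x * y) = F x * F y) \<and>
     (\<forall>x\<in>A. F (phi x) = psi (F x))"

end

theory Submission
  imports Defs
begin

(* Gamma(I) = I, so on B(I) the involution is the Hilbert-space adjoint and x* x = 0 forces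
   x = 0.  Gamma(-I) = (-1)^N is the parity operator, so on B(-I) the involution is x* on
   even and -x* on odd operators.  With a = a_-(e1) we have a^dagger(e1) = -a*, and the
   element x = a a^dagger(e1) + a^dagger(e1) = -(E + O) of B(-I), with even part E = a a*
   and odd part O = a*, satisfies E* E = O* O and E* O = O* E = 0; hence
   x^dagger x = E* E - O* O = 0 although x <> 0.  An involutive isomorphism would carry x
   back to a nonzero element of B(I) with x^dagger x = 0. *)

lemma hadj_carrier [simp]: "A \<in> carrier_mat n m \<Longrightarrow> hadj A \<in> carrier_mat m n"
  by (auto simp: hadj_def)

lemma hadj_dims [simp]: "dim_row (hadj A) = dim_col A" "dim_col (hadj A) = dim_row A"
  by (simp_all add: hadj_def)

lemma hadj_index [simp]:
  "i < dim_col A \<Longrightarrow> j < dim_row A \<Longrightarrow> hadj A $$ (i, j) = cnj (A $$ (j, i))"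
  by (simp add: hadj_def)

lemma hadj_one [simp]: "hadj (1\<^sub>m n) = 1\<^sub>m n"
  by (rule eq_matI) auto

lemma hadj_hadj [simp]: "hadj (hadj A) = A"
  by (rule eq_matI) auto

lemma hadj_add:
  "A \<in> carrier_mat n m \<Longrightarrow> B \<in> carrier_mat n m \<Longrightarrow> hadj (A + B) = hadj A + hadj B"
  by (rule eq_matI) auto

lemma hadj_smult: "hadj (c \<cdot>\<^sub>m A) = cnj c \<cdot>\<^sub>m hadj A"
  by (rule eq_matI) auto

lemma hadj_mult:
  "A \<in> carrier_mat n k \<Longrightarrow> B \<in> carrier_mat k m \<Longrightarrow> hadj (A * B) = hadj B * hadj A"
  by (rule eq_matI) (auto simp: scalar_prod_def intro!: sum.cong)

lemma hadj_mult_self_eq_0: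
  assumes A: "A \<in> carrier_mat n m" and null: "hadj A * A = 0\<^sub>m m m"
  shows "A = 0\<^sub>m n m"
proof (rule eq_matI)
  fix i j assume i: "i < dim_row (0\<^sub>m n m :: complex mat)" and j: "j < dim_col (0\<^sub>m n m :: complex mat)"
  have col: "col A j \<in> carrier_vec n" using A col_dim by blast
  have "col A j \<bullet>c col A j = conjugate (col A j) \<bullet> col A j"
    using conjugate_vec_sprod_comm[OF col col] .
  also have "\<dots> = (hadj A * A) $$ (j, j)"
    using A j by (auto simp: scalar_prod_def intro!: sum.cong)
  also have "\<dots> = 0" using null j by simp
  finally have "col A j = 0\<^sub>v n" using col by simp
  moreover have "A $$ (i, j) = col A j $ i" using A i j by simp
  ultimately show "A $$ (i, j) = 0\<^sub>m n m $$ (i, j)" using i j by simp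
qed (use A in auto)

lemma zero_smult_mat: "A \<in> carrier_mat n m \<Longrightarrow> (0 :: 'a :: semiring_0) \<cdot>\<^sub>m A = 0\<^sub>m n m"
  by (rule eq_matI) auto

lemma inv_iso_anisotropic:
  assumes iso: "inv_iso A phi B psi F"
    and B: "B \<subseteq> carrier_mat n n"
    and zero: "0\<^sub>m n n \<in> A"
    and phi_closed: "\<And>x. x \<in> A \<Longrightarrow> phi x \<in> A"
    and mult_closed: "\<And>x y. x \<in> A \<Longrightarrow> y \<in> A \<Longrightarrow> x * y \<in> A"
    and anisotropic: "\<And>x. x \<in> A \<Longrightarrow> phi x * x = 0\<^sub>m n n \<Longrightarrow> x = 0\<^sub>m n n"
    and y: "y \<in> B" and null: "psi y * y = 0\<^sub>m n n"
  shows "y = 0\<^sub>m n n"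
proof -
  have bij: "bij_betw F A B"
    and smult: "\<And>c x. x \<in> A \<Longrightarrow> F (c \<cdot>\<^sub>m x) = c \<cdot>\<^sub>m F x"
    and mult: "\<And>x x'. x \<in> A \<Longrightarrow> x' \<in> A \<Longrightarrow> F (x * x') = F x * F x'"
    and inv: "\<And>x. x \<in> A \<Longrightarrow> F (phi x) = psi (F x)"
    using iso unfolding inv_iso_def by blast+
  obtain x where x: "x \<in> A" and Fx: "F x = y"
    using bij y unfolding bij_betw_def by blast
  have "F (0\<^sub>m n n) = 0 \<cdot>\<^sub>m F (0\<^sub>m n n)"
    using smult[OF zero, of 0] by simp
  also have "\<dots> = 0\<^sub>m n n"
    using zero bij B by (intro zero_smult_mat) (auto simp: bij_betw_def)
  finally have F0: "F (0\<^sub>m n n) = 0\<^sub>m n n" .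
  have "F (phi x * x) = F (0\<^sub>m n n)"
    using mult[OF phi_closed[OF x] x] inv[OF x] Fx null F0 by simp
  then have "phi x * x = 0\<^sub>m n n"
    using bij mult_closed[OF phi_closed[OF x] x] zero by (auto simp: bij_betw_def inj_on_def)
  then show ?thesis using anisotropic[OF x] Fx F0 by simp
qed

lemma mat_4_eqI:
  assumes "A \<in> carrier_mat 4 4" "B \<in> carrier_mat 4 4"
    and "\<And>i j. i \<in> {0, 1, 2, 3} \<Longrightarrow> j \<in> {0, 1, 2, 3} \<Longrightarrow> A $$ (i, j) = B $$ (i, j)"
  shows "A = B"
proof (rule eq_matI)
  fix i j assume "i < dim_row B" "j < dim_col B"
  then have "i \<in> {0, 1, 2, 3}" "j \<in> {0, 1, 2, 3}" using assms(2) by auto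
  then show "A $$ (i, j) = B $$ (i, j)" by (rule assms(3))
qed (use assms in auto)

lemma sum_4: "sum f {0..<4 :: nat} = f 0 + f 1 + f 2 + f 3"
  by (simp add: eval_nat_numeral)

lemma Gamma_carrier [simp]: "Gamma eta \<in> carrier_mat 4 4"
  by (simp add: Gamma_def)

lemma fermi_cre_carrier [simp]: "fermi_cre f \<in> carrier_mat 4 4"
  by (simp add: fermi_cre_def)

lemma Gamma_one: "Gamma (1\<^sub>m 2) = 1\<^sub>m 4"
  by (rule eq_matI) (auto simp: Gamma_def)

lemma Gamma_minus_one:
  "Gamma (- 1\<^sub>m 2) = mat 4 4 (\<lambda>(i, j). if i = j then (if i = 1 \<or> i = 2 then -1 else 1) else 0)"
proof -
  have "(- 1\<^sub>m 2 :: complex mat) = (-1) \<cdot>\<^sub>m 1\<^sub>m 2" by (rule eq_matI) auto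
  then have "det (- 1\<^sub>m 2 :: complex mat) = 1" by simp
  then show ?thesis by (intro mat_4_eqI) (auto simp: Gamma_def)
qed

lemma fermi_cre_dag_minus_one: "fermi_cre_dag (- 1\<^sub>m 2) f = - fermi_cre f"
  unfolding fermi_cre_dag_def Gamma_minus_one
  by (rule mat_4_eqI) (auto simp: fermi_cre_def scalar_prod_def sum_4)

lemma fermi_ann_carrier [simp]: "fermi_ann f \<in> carrier_mat 4 4"
  by (simp add: fermi_ann_def)

lemma fermi_cre_dag_carrier [simp]: "fermi_cre_dag eta f \<in> carrier_mat 4 4"
  unfolding fermi_cre_dag_def by (meson Gamma_carrier fermi_cre_carrier mult_carrier_mat)

lemma Balg_carrier: "x \<in> Balg eta \<Longrightarrow> x \<in> carrier_mat 4 4"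
  by (induction rule: Balg.induct) (auto intro: mult_carrier_mat)

lemma zero_in_Balg: "0\<^sub>m 4 4 \<in> Balg eta"
proof -
  have "0 \<cdot>\<^sub>m 1\<^sub>m 4 \<in> Balg eta" by (rule Balg.smult[OF Balg.unit])
  moreover have "0 \<cdot>\<^sub>m 1\<^sub>m 4 = (0\<^sub>m 4 4 :: complex mat)" by (rule zero_smult_mat) simp
  ultimately show ?thesis by simp
qed

lemma dagger_one: "x \<in> carrier_mat 4 4 \<Longrightarrow> dagger (1\<^sub>m 2) x = hadj x"
  by (simp add: dagger_def Gamma_one carrier_matD)

lemma Balg_one_hadj_closed: "x \<in> Balg (1\<^sub>m 2) \<Longrightarrow> hadj x \<in> Balg (1\<^sub>m 2)"
proof (induction rule: Balg.induct)
  case (gen_ann i)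
  have "hadj (fermi_ann (fock_e i)) = fermi_cre_dag (1\<^sub>m 2) (fock_e i)"
    by (simp add: fermi_ann_def fermi_cre_dag_def Gamma_one carrier_matD[OF fermi_cre_carrier])
  then show ?case using gen_ann Balg.gen_cre by metis
next
  case (gen_cre i)
  have "hadj (fermi_cre_dag (1\<^sub>m 2) (fock_e i)) = fermi_ann (fock_e i)"
    by (simp add: fermi_ann_def fermi_cre_dag_def Gamma_one carrier_matD[OF fermi_cre_carrier])
  then show ?case using gen_cre Balg.gen_ann by metis
next
  case (add x y)
  then show ?case using Balg_carrier hadj_add Balg.add by metis
next
  case (mult x y)
  then show ?case using Balg_carrier hadj_mult Balg.mult by metis
next
  case (smult x c)
  then show ?case using hadj_smult Balg.smult by metis
qed (simp add: Balg.unit)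

lemma Balg_one_dagger_closed: "x \<in> Balg (1\<^sub>m 2) \<Longrightarrow> dagger (1\<^sub>m 2) x \<in> Balg (1\<^sub>m 2)"
  by (simp add: Balg_carrier dagger_one Balg_one_hadj_closed)

lemma Balg_one_anisotropic:
  "x \<in> Balg (1\<^sub>m 2) \<Longrightarrow> dagger (1\<^sub>m 2) x * x = 0\<^sub>m 4 4 \<Longrightarrow> x = 0\<^sub>m 4 4"
  using Balg_carrier dagger_one hadj_mult_self_eq_0 by metis

lemma fermi_cre_e1:
  "fermi_cre (fock_e 0) = mat 4 4 (\<lambda>(i, j). if (i, j) = (1, 0) \<or> (i, j) = (3, 2) then 1 else 0)"
  by (rule eq_matI) (auto simp: fermi_cre_def fock_e_def)

lemma fermi_ann_e1:
  "fermi_ann (fock_e 0) = mat 4 4 (\<lambda>(i, j). if (i, j) = (0, 1) \<or> (i, j) = (2, 3) then 1 else 0)"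
  unfolding fermi_ann_def fermi_cre_e1 by (rule eq_matI) auto

definition isotropic_witness :: "complex mat" where
  "isotropic_witness = fermi_ann (fock_e 0) * fermi_cre_dag (- 1\<^sub>m 2) (fock_e 0)
     + fermi_cre_dag (- 1\<^sub>m 2) (fock_e 0)"

lemma isotropic_witness_in_Balg: "isotropic_witness \<in> Balg (- 1\<^sub>m 2)"
  unfolding isotropic_witness_def
  by (intro Balg.add Balg.mult Balg.gen_ann Balg.gen_cre) simp_all

lemma isotropic_witness_eq:
  "isotropic_witness = mat 4 4 (\<lambda>(i, j). if (i, j) \<in> {(0, 0), (1, 0), (2, 2), (3, 2)} then -1 else 0)"
  unfolding isotropic_witness_def fermi_cre_dag_minus_one fermi_ann_e1 fermi_cre_e1
  by (rule mat_4_eqI) (auto simp: scalar_prod_def sum_4)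

lemma isotropic_witness_nonzero: "isotropic_witness \<noteq> 0\<^sub>m 4 4"
proof
  assume "isotropic_witness = 0\<^sub>m 4 4"
  then have "isotropic_witness $$ (0, 0) = (0\<^sub>m 4 4 :: complex mat) $$ (0, 0)" by simp
  then show False by (simp add: isotropic_witness_eq)
qed

lemma dagger_isotropic_witness:
  "dagger (- 1\<^sub>m 2) isotropic_witness =
     mat 4 4 (\<lambda>(i, j). if (i, j) \<in> {(0, 0), (2, 2)} then -1 else if (i, j) \<in> {(0, 1), (2, 3)} then 1 else 0)"
  unfolding dagger_def Gamma_minus_one isotropic_witness_eq
  by (rule mat_4_eqI) (auto simp: scalar_prod_def sum_4)

lemma isotropic_witness_null:
  "dagger (- 1\<^sub>m 2) isotropic_witness * isotropic_witness = 0\<^sub>m 4 4"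
  unfolding dagger_isotropic_witness unfolding isotropic_witness_eq
  by (rule mat_4_eqI) (auto simp: scalar_prod_def sum_4)

theorem mainTheorem6:
  shows "\<not> (\<exists>F. inv_iso (Balg (1\<^sub>m 2)) (dagger (1\<^sub>m 2))
                       (Balg (- (1\<^sub>m 2))) (dagger (- (1\<^sub>m 2))) F)"
proof
  assume "\<exists>F. inv_iso (Balg (1\<^sub>m 2)) (dagger (1\<^sub>m 2))
                       (Balg (- (1\<^sub>m 2))) (dagger (- (1\<^sub>m 2))) F"
  then obtain F where iso: "inv_iso (Balg (1\<^sub>m 2)) (dagger (1\<^sub>m 2))
                       (Balg (- (1\<^sub>m 2))) (dagger (- (1\<^sub>m 2))) F" ..
  have "Balg (- 1\<^sub>m 2) \<subseteq> carrier_mat 4 4" using Balg_carrier by blast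
  then have "isotropic_witness = 0\<^sub>m 4 4"
    using inv_iso_anisotropic[OF iso _ zero_in_Balg Balg_one_dagger_closed Balg.mult
        Balg_one_anisotropic isotropic_witness_in_Balg isotropic_witness_null]
    by blast
  with isotropic_witness_nonzero show False ..
qed

end
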